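(* Let $(\alpha_j)_{j\ge1}$ be nonnegative with $\sum_j j\alpha_j=1$ and $\alpha_1<1$, and for $\omega\ge1$ let \[q_j^{(\omega)}=\frac{j\alpha_j}{\omega^{j-1}h_j(\omega)}\left(\frac{1-\sum_{i\ge1}\frac{1}{4^{i-1}}\binom{2i-1}{i-1}\frac{i\alpha_i}{\omega^{i-1}h_i(\omega)}}{4}\right)^{j-1},\qquad h_p(\omega)=\sum_{s=0}^{p-1}(4\omega)^{-s}\binom{2s}{s}.\] Then for every $j\ge1$, the function $\omega\mapsto q_j^{(\omega)}$ is nonincreasing on $[1,+\infty)$. Moreover, if $j\ge2$ and $\alpha_j>0$, this function is (strictly) decreasing.
   Context: ($\mathbf q^{(\omega)}$ is the unique weight sequence whose infinite Boltzmann planar map has root face half-degree law $(j\alpha_j)$ and hyperbolicity parameter $\omega$, but the claim only concerns the explicit formula above.) *)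

theory Defs
  imports "HOL-Analysis.Analysis"
begin

definition h_fun :: "nat \<Rightarrow> real \<Rightarrow> real" where
  "h_fun p \<omega> = (\<Sum>s<p. real ((2 * s) choose s) / (4 * \<omega>) ^ s)"

definition q_fun :: "(nat \<Rightarrow> real) \<Rightarrow> real \<Rightarrow> nat \<Rightarrow> real" where
  "q_fun \<alpha> \<omega> j =
     real j * \<alpha> j / (\<omega> ^ (j - 1) * h_fun j \<omega>) *
     ((1 - (\<Sum>i. (let k = Suc i in
          real ((2*k - 1) choose (k - 1)) / 4 ^ (k - 1)
          * (real k * \<alpha> k / (\<omega> ^ (k - 1) * h_fun k \<omega>))))) / 4) ^ (j - 1)"

end

theory Submission
  imports Defs
begin

text \<open>
  Let a(s) = (2s choose s)/4^s and G_j(w) = w^(j-1) h_j(w), a polynomial in w with nonnegative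
  coefficients. As (2i-1 choose i-1)/4^(i-1) = 2 a(i) and sum_i i alpha_i = 1, we have
  q_j(w) = j alpha_j / G_j(w) * (W(w)/4)^(j-1) with W = sum_i i alpha_i phi_i and
  phi_i = 1 - 2 a(i)/G_i. Compare w = x with w = s^3 x for s >= 1: induction on j gives
  G_j(s^3 x) >= s^(2(j-1)) G_j(x), strictly if s > 1 and j >= 2, while phi_i(s^3 x) <= s^2 phi_i(x)
  because phi_i^3 / w^2 is nonincreasing, which amounts to the differential inequality
  3 a(i) w G_i'(w) <= G_i(w)^2 - 2 a(i) G_i(w). The powers of s cancel in q_j.
\<close>

definition central_binom_weight :: "nat \<Rightarrow> real" where
  "central_binom_weight s = real ((2 * s) choose s) / 4 ^ s"

lemma central_binom_weight_pos: "0 < central_binom_weight s"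
  by (simp add: central_binom_weight_def)

lemma central_binom_weight_Suc:
  "central_binom_weight (Suc i) * (2 * real i + 2) = central_binom_weight i * (2 * real i + 1)"
  unfolding central_binom_weight_def
  by (simp add: binomial_fact fact_Suc divide_simps del: binomial_Suc_Suc) (simp add: algebra_simps)

lemma odd_binomial_div_four_power:
  "real ((2 * i + 1) choose i) / 4 ^ i = 2 * central_binom_weight (Suc i)"
  unfolding central_binom_weight_def
  by (simp add: binomial_fact fact_Suc divide_simps del: binomial_Suc_Suc)

fun hpoly :: "nat \<Rightarrow> real \<Rightarrow> real" where
  "hpoly 0 x = 0"
| "hpoly (Suc i) x = x * hpoly i x + central_binom_weight i"

fun hpoly_deriv :: "nat \<Rightarrow> real \<Rightarrow> real" where
  "hpoly_deriv 0 x = 0"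
| "hpoly_deriv (Suc i) x = hpoly i x + x * hpoly_deriv i x"

lemma hpoly_eq_h_fun: "0 < x \<Longrightarrow> hpoly (Suc i) x = x ^ i * h_fun (Suc i) x"
proof (induction i)
  case 0
  then show ?case by (simp add: h_fun_def central_binom_weight_def)
next
  case (Suc i)
  have "h_fun (Suc (Suc i)) x = h_fun (Suc i) x + central_binom_weight (Suc i) / x ^ Suc i"
    by (simp add: h_fun_def central_binom_weight_def power_mult_distrib)
  with Suc show ?case
    by (simp add: field_simps)
qed

lemma hpoly_has_real_derivative: "(hpoly i has_real_derivative hpoly_deriv i x) (at x)"
proof (induction i)
  case (Suc i)
  have "hpoly (Suc i) = (\<lambda>y. y * hpoly i y + central_binom_weight i)"
    by auto
  then show ?case
    by (auto intro!: derivative_eq_intros Suc.IH)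
qed simp

lemma hpoly_one: "hpoly i 1 = 2 * real i * central_binom_weight i"
proof (induction i)
  case (Suc i)
  then show ?case
    using central_binom_weight_Suc[of i] by (simp add: algebra_simps)
qed simp

lemma hpoly_nonneg: "0 \<le> x \<Longrightarrow> 0 \<le> hpoly i x"
  by (induction i) (simp_all add: add_nonneg_nonneg less_imp_le central_binom_weight_pos)

lemma hpoly_pos: "0 \<le> x \<Longrightarrow> 1 \<le> i \<Longrightarrow> 0 < hpoly i x"
  by (cases i) (simp_all add: add_nonneg_pos central_binom_weight_pos hpoly_nonneg)

lemma hpoly_mono: "0 \<le> x \<Longrightarrow> x \<le> y \<Longrightarrow> hpoly i x \<le> hpoly i y"
  by (induction i) (auto intro!: mult_mono hpoly_nonneg)

lemma hpoly_ge: "1 \<le> x \<Longrightarrow> 2 * real i * central_binom_weight i \<le> hpoly i x"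
  using hpoly_mono[of 1 x i] by (simp add: hpoly_one)

declare hpoly.simps(2) [simp del]

lemma power_minus_one_less:
  fixes s :: real
  assumes "1 < s" "0 < n"
  shows "s ^ n - 1 < real n * s ^ n * (s - 1)"
proof -
  have "(\<Sum>k<n. s ^ k) < (\<Sum>k<n. s ^ n)"
    using assms by (intro sum_strict_mono) (auto intro: power_strict_increasing)
  then show ?thesis
    using assms by (simp add: power_diff_1_eq mult.commute)
qed

lemma hpoly_scale_step:
  assumes x: "1 \<le> x" and s: "1 < s"
    and IH: "s ^ (2 * i) * hpoly (Suc i) x \<le> hpoly (Suc i) (s ^ 3 * x)"
  shows "s ^ (2 * Suc i) * hpoly (Suc (Suc i)) x < hpoly (Suc (Suc i)) (s ^ 3 * x)"
proof -
  define a where "a = central_binom_weight (Suc i)"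
  define X where "X = x * hpoly (Suc i) x"
  define n where "n = 2 * Suc i"
  have "real n * a \<le> hpoly (Suc i) x"
    using hpoly_ge[OF x, of "Suc i"] by (simp add: n_def a_def)
  also have "\<dots> \<le> X"
    using x hpoly_nonneg[of x "Suc i"] by (simp add: X_def mult_le_cancel_right1)
  finally have na: "real n * a \<le> X" .
  have "(s ^ n - 1) * a < real n * s ^ n * (s - 1) * a"
    using power_minus_one_less[OF s, of n] central_binom_weight_pos[of "Suc i"]
    by (simp add: a_def n_def)
  also have "\<dots> = s ^ n * (s - 1) * (real n * a)"
    by simp
  also have "\<dots> \<le> s ^ n * (s - 1) * X"
    using na s by (intro mult_left_mono) auto
  finally have "s ^ n * a - a < s ^ n * s * X - s ^ n * X"
    by (simp add: algebra_simps)
  moreover have "s ^ n * s * X = s ^ 3 * x * (s ^ (2 * i) * hpoly (Suc i) x)"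
    by (simp add: X_def n_def power_add power3_eq_cube mult_ac)
  moreover have "\<dots> \<le> s ^ 3 * x * hpoly (Suc i) (s ^ 3 * x)"
    using IH x s by (intro mult_left_mono) auto
  ultimately show ?thesis
    by (simp only: hpoly.simps X_def a_def n_def distrib_left)
qed

lemma hpoly_scale:
  assumes "1 \<le> x" "1 \<le> s"
  shows "s ^ (2 * i) * hpoly (Suc i) x \<le> hpoly (Suc i) (s ^ 3 * x)"
proof (cases "s = 1")
  case False
  then have "1 < s"
    using assms by simp
  then show ?thesis
  proof (induction i)
    case (Suc i)
    then show ?case
      using assms(1) hpoly_scale_step by (blast intro: less_imp_le)
  qed (simp add: hpoly.simps)
qed simp

lemma hpoly_scale_strict:
  assumes "1 \<le> x" "1 < s" "1 \<le> i"
  shows "s ^ (2 * i) * hpoly (Suc i) x < hpoly (Suc i) (s ^ 3 * x)"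
  using assms hpoly_scale_step[of x s "i - 1"] hpoly_scale[of x s "i - 1"]
  by (cases i) auto

lemma hpoly_deriv_bound:
  assumes x: "1 \<le> x"
  shows "3 * central_binom_weight i * (x * hpoly_deriv i x)
    \<le> hpoly i x ^ 2 - 2 * central_binom_weight i * hpoly i x"
proof (induction i)
  case (Suc i)
  define a where "a = central_binom_weight i"
  define G where "G = hpoly i x"
  define E where "E = x * hpoly_deriv i x"
  define r where "r = real i"
  have r: "0 \<le> r" and a: "0 < a" and G: "2 * r * a \<le> G" "0 \<le> G"
    using hpoly_ge[OF x, of i] hpoly_nonneg[of x i] x central_binom_weight_pos
    by (auto simp: r_def a_def G_def)
  have xG: "G \<le> x * G"
    using x G by (simp add: mult_le_cancel_right1)
  have IH: "(2 * r + 1) * x * (3 * a * E) \<le> (2 * r + 1) * x * (G ^ 2 - 2 * a * G)"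
    using Suc.IH r x by (intro mult_left_mono) (auto simp: a_def G_def E_def)
  have square_bound: "(2 * r + 2) * (x * G * G) \<le> (2 * r + 2) * (x * G * (x * G))"
    using xG G r x by (intro mult_left_mono) auto
  have gap_bound: "x * G * a \<le> x * G * (G - (2 * r - 1) * a)"
    using G x by (intro mult_left_mono) (auto simp: algebra_simps)
  have product_bound: "a * (2 * r * a) \<le> a * (x * G)"
    using G xG a by (intro mult_left_mono) auto
  define b where "b = central_binom_weight (Suc i)"
  have b: "b * (2 * r + 2) = a * (2 * r + 1)"
    using central_binom_weight_Suc by (simp add: a_def b_def r_def)
  \<comment> \<open>Multiplying by \<open>2 * r + 2\<close> turns \<open>b\<close> into \<open>a * (2 * r + 1)\<close>; the bound is
    then a linear combination of \<open>IH\<close> and the three bounds above.\<close>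
  have "(2 * r + 2) * (3 * b * (x * hpoly_deriv (Suc i) x)) = 3 * (b * (2 * r + 2)) * (x * (G + E))"
    by (simp add: G_def E_def algebra_simps)
  also have "\<dots> = 3 * (a * (2 * r + 1)) * (x * (G + E))"
    by (simp only: b)
  also have "\<dots> \<le> (2 * r + 2) * (x * G + a) ^ 2 - 2 * (a * (2 * r + 1)) * (x * G + a)"
    using IH square_bound gap_bound product_bound by (simp add: algebra_simps power2_eq_square)
  also have "\<dots> = (2 * r + 2) * (x * G + a) ^ 2 - 2 * (b * (2 * r + 2)) * (x * G + a)"
    by (simp only: b)
  also have "\<dots> = (2 * r + 2) * (hpoly (Suc i) x ^ 2 - 2 * b * hpoly (Suc i) x)"
    by (simp add: hpoly.simps G_def a_def algebra_simps)
  finally have "(2 * r + 2) * (3 * b * (x * hpoly_deriv (Suc i) x))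
      \<le> (2 * r + 2) * (hpoly (Suc i) x ^ 2 - 2 * b * hpoly (Suc i) x)" .
  then show ?case
    using r by (simp add: b_def mult_le_cancel_left_pos)
qed simp

definition phi :: "nat \<Rightarrow> real \<Rightarrow> real" where
  "phi i t = 1 - 2 * central_binom_weight i / hpoly i t"

lemma phi_nonneg: "1 \<le> x \<Longrightarrow> 1 \<le> i \<Longrightarrow> 0 \<le> phi i x"
proof -
  assume x: "1 \<le> x" and i: "1 \<le> i"
  have "2 * central_binom_weight i \<le> 2 * real i * central_binom_weight i"
    using i central_binom_weight_pos[of i] by simp
  also have "\<dots> \<le> hpoly i x"
    using hpoly_ge[OF x] .
  finally show ?thesis
    using hpoly_pos[of x i] x i by (simp add: phi_def)
qed

lemma phi_le_one: "1 \<le> x \<Longrightarrow> 1 \<le> i \<Longrightarrow> phi i x \<le> 1"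
  using hpoly_pos[of x i] central_binom_weight_pos[of i] by (simp add: phi_def)

lemma phi_pos: "1 \<le> x \<Longrightarrow> 2 \<le> i \<Longrightarrow> 0 < phi i x"
proof -
  assume x: "1 \<le> x" and i: "2 \<le> i"
  have "2 * central_binom_weight i < 2 * real i * central_binom_weight i"
    using i central_binom_weight_pos[of i] by simp
  also have "\<dots> \<le> hpoly i x"
    using hpoly_ge[OF x] .
  finally show ?thesis
    using hpoly_pos[of x i] x i by (simp add: phi_def)
qed

lemma phi_has_real_derivative:
  assumes "0 < t" "1 \<le> i"
  shows "(phi i has_real_derivative
    2 * central_binom_weight i * hpoly_deriv i t / hpoly i t ^ 2) (at t)"
  unfolding phi_def[abs_def]
  using assms hpoly_pos[of t i]
  by (auto intro!: derivative_eq_intros hpoly_has_real_derivative simp: power2_eq_square)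

lemma phi_cube_div_square_deriv:
  assumes "0 < t" "1 \<le> i"
  shows "((\<lambda>t. phi i t ^ 3 / t ^ 2) has_real_derivative
    phi i t ^ 2 * (3 * (t * (2 * central_binom_weight i * hpoly_deriv i t / hpoly i t ^ 2)) - 2 * phi i t) / t ^ 3) (at t)"
  using assms
  by (auto intro!: derivative_eq_intros phi_has_real_derivative simp: field_simps power2_eq_square power3_eq_cube)

lemma phi_cube_div_square_antimono:
  assumes i: "1 \<le> i"
  shows "antimono_on {1..} (\<lambda>t. phi i t ^ 3 / t ^ 2)"
proof (rule monotone_onI)
  fix x y :: real
  assume "x \<in> {1..}" "y \<in> {1..}" "x \<le> y"
  show "phi i y ^ 3 / y ^ 2 \<le> phi i x ^ 3 / x ^ 2"
  proof (rule DERIV_nonpos_imp_nonincreasing[OF \<open>x \<le> y\<close>])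
    fix t
    assume "x \<le> t" "t \<le> y"
    then have t: "1 \<le> t"
      using \<open>x \<in> {1..}\<close> by simp
    define a where "a = central_binom_weight i"
    define G where "G = hpoly i t"
    have "0 < G"
      using hpoly_pos[of t i] t i by (simp add: G_def)
    have "3 * (t * (2 * a * hpoly_deriv i t / G ^ 2)) = 2 * (3 * a * (t * hpoly_deriv i t) / G ^ 2)"
      by simp
    also have "\<dots> \<le> 2 * ((G ^ 2 - 2 * a * G) / G ^ 2)"
      using hpoly_deriv_bound[OF t, of i] by (simp add: a_def G_def divide_right_mono)
    also have "\<dots> = 2 * phi i t"
      using \<open>0 < G\<close> by (simp add: phi_def a_def G_def field_simps power2_eq_square)
    finally have "phi i t ^ 2 * (3 * (t * (2 * a * hpoly_deriv i t / G ^ 2)) - 2 * phi i t) / t ^ 3 \<le> 0"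
      using t by (intro divide_nonpos_pos mult_nonneg_nonpos) auto
    then show "\<exists>D. ((\<lambda>t. phi i t ^ 3 / t ^ 2) has_real_derivative D) (at t) \<and> D \<le> 0"
      using phi_cube_div_square_deriv[of t i] t i by (auto simp: a_def G_def)
  qed
qed

lemma phi_scale:
  assumes i: "1 \<le> i" and x: "1 \<le> x" and s: "1 \<le> s"
  shows "phi i (s ^ 3 * x) \<le> s ^ 2 * phi i x"
proof -
  define y where "y = s ^ 3 * x"
  have "x \<le> y"
    using x s by (simp add: y_def mult_le_cancel_right1)
  then have "phi i y ^ 3 / y ^ 2 \<le> phi i x ^ 3 / x ^ 2"
    using monotone_onD[OF phi_cube_div_square_antimono[OF i], of x y] x by simp
  then have "phi i y ^ 3 \<le> phi i x ^ 3 / x ^ 2 * y ^ 2"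
    using x \<open>x \<le> y\<close> by (simp add: pos_divide_le_eq)
  also have "\<dots> = (s ^ 2 * phi i x) ^ 3"
    using x by (simp add: y_def field_simps power2_eq_square power3_eq_cube)
  finally have "phi i y ^ Suc 2 \<le> (s ^ 2 * phi i x) ^ Suc 2"
    by simp
  moreover have "0 \<le> s ^ 2 * phi i x"
    using phi_nonneg[OF x i] by simp
  ultimately show ?thesis
    unfolding y_def by (rule power_le_imp_le_base)
qed

definition W :: "(nat \<Rightarrow> real) \<Rightarrow> real \<Rightarrow> real" where
  "W \<alpha> w = 1 - (\<Sum>i. 2 * central_binom_weight (Suc i) * (real (Suc i) * \<alpha> (Suc i) / hpoly (Suc i) w))"

lemma q_fun_eq:
  assumes w: "0 < w"
  shows "q_fun \<alpha> w (Suc m) = real (Suc m) * \<alpha> (Suc m) / hpoly (Suc m) w * (W \<alpha> w / 4) ^ m"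
proof -
  have "(let k = Suc i in real ((2 * k - 1) choose (k - 1)) / 4 ^ (k - 1)
          * (real k * \<alpha> k / (w ^ (k - 1) * h_fun k w)))
      = 2 * central_binom_weight (Suc i) * (real (Suc i) * \<alpha> (Suc i) / hpoly (Suc i) w)" for i
    by (simp add: hpoly_eq_h_fun[OF w] odd_binomial_div_four_power[symmetric])
  then show ?thesis
    by (simp add: q_fun_def W_def hpoly_eq_h_fun[OF w])
qed

context
  fixes \<alpha> :: "nat \<Rightarrow> real"
  assumes nonneg: "\<And>j. 1 \<le> j \<Longrightarrow> 0 \<le> \<alpha> j"
    and sums_one: "(\<lambda>j. real (Suc j) * \<alpha> (Suc j)) sums 1"
begin

lemma weight_nonneg: "0 \<le> real (Suc i) * \<alpha> (Suc i)"
  using nonneg[of "Suc i"] by simp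

lemma summable_weight_phi:
  assumes w: "1 \<le> w"
  shows "summable (\<lambda>i. real (Suc i) * \<alpha> (Suc i) * phi (Suc i) w)"
proof (rule summable_comparison_test')
  show "summable (\<lambda>i. real (Suc i) * \<alpha> (Suc i))"
    using sums_one by (rule sums_summable)
  show "norm (real (Suc i) * \<alpha> (Suc i) * phi (Suc i) w) \<le> real (Suc i) * \<alpha> (Suc i)" for i
    using phi_nonneg[OF w, of "Suc i"] phi_le_one[OF w, of "Suc i"] nonneg[of "Suc i"]
    by (simp add: abs_mult mult_left_le)
qed

lemma W_eq_suminf_phi:
  assumes w: "1 \<le> w"
  shows "W \<alpha> w = (\<Sum>i. real (Suc i) * \<alpha> (Suc i) * phi (Suc i) w)"
proof -
  have "W \<alpha> w = (\<Sum>i. real (Suc i) * \<alpha> (Suc i))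
      - (\<Sum>i. real (Suc i) * \<alpha> (Suc i) - real (Suc i) * \<alpha> (Suc i) * phi (Suc i) w)"
    using hpoly_pos[of w] w sums_unique[OF sums_one]
    by (simp add: W_def phi_def field_simps)
  also have "\<dots> = (\<Sum>i. real (Suc i) * \<alpha> (Suc i) * phi (Suc i) w)"
    using suminf_diff[OF sums_summable[OF sums_one] summable_weight_phi[OF w]] by simp
  finally show ?thesis .
qed

lemma W_nonneg:
  assumes "1 \<le> w"
  shows "0 \<le> W \<alpha> w"
  unfolding W_eq_suminf_phi[OF assms] using assms
  by (intro suminf_nonneg summable_weight_phi mult_nonneg_nonneg weight_nonneg phi_nonneg) auto

lemma W_pos:
  assumes w: "1 \<le> w" and j: "2 \<le> j" and "0 < \<alpha> j"
  shows "0 < W \<alpha> w"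
proof -
  obtain m where m: "j = Suc m"
    using j by (cases j) auto
  have "0 < real (Suc m) * \<alpha> (Suc m) * phi (Suc m) w"
    using phi_pos[OF w j] \<open>0 < \<alpha> j\<close> m by simp
  then show ?thesis
    using phi_nonneg[OF w] weight_nonneg summable_weight_phi[OF w]
    by (auto simp: W_eq_suminf_phi[OF w] intro!: suminf_pos2[of _ m])
qed

lemma W_scale:
  assumes x: "1 \<le> x" and s: "1 \<le> s"
  shows "W \<alpha> (s ^ 3 * x) \<le> s ^ 2 * W \<alpha> x"
proof -
  have y: "1 \<le> s ^ 3 * x"
    using x s by (metis mult_mono' one_le_power mult_1_left zero_le_one)
  have "W \<alpha> (s ^ 3 * x) = (\<Sum>i. real (Suc i) * \<alpha> (Suc i) * phi (Suc i) (s ^ 3 * x))"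
    by (rule W_eq_suminf_phi[OF y])
  also have "\<dots> \<le> (\<Sum>i. s ^ 2 * (real (Suc i) * \<alpha> (Suc i) * phi (Suc i) x))"
  proof (rule suminf_le)
    show "real (Suc i) * \<alpha> (Suc i) * phi (Suc i) (s ^ 3 * x)
        \<le> s ^ 2 * (real (Suc i) * \<alpha> (Suc i) * phi (Suc i) x)" for i
      using mult_left_mono[OF phi_scale[OF _ x s, of "Suc i"] weight_nonneg[of i]]
      by (simp add: mult_ac)
  qed (intro summable_weight_phi summable_mult y x)+
  also have "\<dots> = s ^ 2 * W \<alpha> x"
    unfolding W_eq_suminf_phi[OF x] by (rule suminf_mult[OF summable_weight_phi[OF x]])
  finally show ?thesis .
qed

lemma W_power_scale:
  assumes x: "1 \<le> x" and s: "1 \<le> s"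
  shows "(W \<alpha> (s ^ 3 * x) / 4) ^ m \<le> s ^ (2 * m) * (W \<alpha> x / 4) ^ m"
proof -
  have "1 \<le> s ^ 3 * x"
    using x s by (metis mult_mono' one_le_power mult_1_left zero_le_one)
  then have "(W \<alpha> (s ^ 3 * x) / 4) ^ m \<le> (s ^ 2 * (W \<alpha> x / 4)) ^ m"
    using W_scale[OF x s] W_nonneg by (intro power_mono) auto
  then show ?thesis
    by (simp only: power_mult power_mult_distrib)
qed

lemma q_fun_scale:
  assumes x: "1 \<le> x" and s: "1 \<le> s"
  shows "q_fun \<alpha> (s ^ 3 * x) (Suc m) \<le> q_fun \<alpha> x (Suc m)"
proof -
  define c where "c = real (Suc m) * \<alpha> (Suc m)"
  define V where "V = (W \<alpha> x / 4) ^ m"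
  have y: "1 \<le> s ^ 3 * x"
    using x s by (metis mult_mono' one_le_power mult_1_left zero_le_one)
  have "0 \<le> c" "0 \<le> V" "1 \<le> s ^ (2 * m)"
    using weight_nonneg W_nonneg[OF x] s by (simp_all add: c_def V_def)
  have "q_fun \<alpha> (s ^ 3 * x) (Suc m) = c / hpoly (Suc m) (s ^ 3 * x) * (W \<alpha> (s ^ 3 * x) / 4) ^ m"
    using q_fun_eq[of "s ^ 3 * x"] y by (simp add: c_def)
  also have "\<dots> \<le> c / hpoly (Suc m) (s ^ 3 * x) * (s ^ (2 * m) * V)"
    using W_power_scale[OF x s, of m] hpoly_pos[of "s ^ 3 * x" "Suc m"] y \<open>0 \<le> c\<close>
    by (intro mult_left_mono) (auto simp: V_def)
  also have "\<dots> \<le> c / (s ^ (2 * m) * hpoly (Suc m) x) * (s ^ (2 * m) * V)"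
    using hpoly_scale[OF x s, of m] hpoly_pos[of x "Suc m"] hpoly_pos[of "s ^ 3 * x" "Suc m"] x y
      \<open>0 \<le> c\<close> \<open>0 \<le> V\<close> \<open>1 \<le> s ^ (2 * m)\<close>
    by (intro mult_right_mono divide_left_mono) auto
  also have "\<dots> = q_fun \<alpha> x (Suc m)"
    using q_fun_eq[of x] x s by (simp add: c_def V_def)
  finally show ?thesis .
qed

lemma q_fun_scale_strict:
  assumes x: "1 \<le> x" and s: "1 < s" and m: "1 \<le> m" and "0 < \<alpha> (Suc m)"
  shows "q_fun \<alpha> (s ^ 3 * x) (Suc m) < q_fun \<alpha> x (Suc m)"
proof -
  define c where "c = real (Suc m) * \<alpha> (Suc m)"
  define V where "V = (W \<alpha> x / 4) ^ m"
  have y: "1 \<le> s ^ 3 * x"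
    using x s by (metis less_imp_le mult_mono' one_le_power mult_1_left zero_le_one)
  have "0 < c" "0 < V" "1 < s ^ (2 * m)"
    using \<open>0 < \<alpha> (Suc m)\<close> W_pos[OF x, of "Suc m"] s m by (simp_all add: c_def V_def)
  have "q_fun \<alpha> (s ^ 3 * x) (Suc m) = c / hpoly (Suc m) (s ^ 3 * x) * (W \<alpha> (s ^ 3 * x) / 4) ^ m"
    using q_fun_eq[of "s ^ 3 * x"] y by (simp add: c_def)
  also have "\<dots> \<le> c / hpoly (Suc m) (s ^ 3 * x) * (s ^ (2 * m) * V)"
    using W_power_scale[OF x, of s m] hpoly_pos[of "s ^ 3 * x" "Suc m"] y s \<open>0 < c\<close>
    by (intro mult_left_mono) (auto simp: V_def)
  also have "\<dots> < c / (s ^ (2 * m) * hpoly (Suc m) x) * (s ^ (2 * m) * V)"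
    using hpoly_scale_strict[OF x s m] hpoly_pos[of x "Suc m"] hpoly_pos[of "s ^ 3 * x" "Suc m"] x y
      \<open>0 < c\<close> \<open>0 < V\<close> \<open>1 < s ^ (2 * m)\<close>
    by (intro mult_strict_right_mono divide_strict_left_mono) auto
  also have "\<dots> = q_fun \<alpha> x (Suc m)"
    using q_fun_eq[of x] x s by (simp add: c_def V_def)
  finally show ?thesis .
qed

lemma q_fun_antimono: "antimono_on {1..} (\<lambda>\<omega>. q_fun \<alpha> \<omega> (Suc m))"
proof (rule monotone_onI)
  fix x y :: real
  assume "x \<in> {1..}" "y \<in> {1..}" "x \<le> y"
  then show "q_fun \<alpha> y (Suc m) \<le> q_fun \<alpha> x (Suc m)"
    using q_fun_scale[of x "root 3 (y / x)" m] by simp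
qed

lemma q_fun_strict_antimono:
  assumes "1 \<le> m" "0 < \<alpha> (Suc m)"
  shows "strict_antimono_on {1..} (\<lambda>\<omega>. q_fun \<alpha> \<omega> (Suc m))"
proof (rule monotone_onI)
  fix x y :: real
  assume "x \<in> {1..}" "y \<in> {1..}" "x < y"
  then show "q_fun \<alpha> y (Suc m) < q_fun \<alpha> x (Suc m)"
    using q_fun_scale_strict[of x "root 3 (y / x)" m] assms by simp
qed

end

theorem lemma15:
  fixes \<alpha> :: "nat \<Rightarrow> real"
  assumes nonneg: "\<And>j. j \<ge> 1 \<Longrightarrow> \<alpha> j \<ge> 0"
    and sum1: "(\<lambda>j. real (Suc j) * \<alpha> (Suc j)) sums 1"
    and a1: "\<alpha> 1 < 1"
  shows "(\<forall>j \<ge> 1. antimono_on {1..} (\<lambda>\<omega>. q_fun \<alpha> \<omega> j)) \<and>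
         (\<forall>j \<ge> 2. \<alpha> j > 0 \<longrightarrow> strict_antimono_on {1..} (\<lambda>\<omega>. q_fun \<alpha> \<omega> j))"
proof (intro conjI allI impI)
  fix j :: nat
  assume "1 \<le> j"
  then show "antimono_on {1..} (\<lambda>\<omega>. q_fun \<alpha> \<omega> j)"
    using q_fun_antimono[OF nonneg sum1] by (cases j) auto
next
  fix j :: nat
  assume "2 \<le> j" "0 < \<alpha> j"
  then show "strict_antimono_on {1..} (\<lambda>\<omega>. q_fun \<alpha> \<omega> j)"
    using q_fun_strict_antimono[OF nonneg sum1] by (cases j) auto
qed

end
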